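(* Let $n,q\ge1$ and $c\ge0$ be integers. If there exists a $PComS(n,q,-c)$, then there exists a partial Hadamard matrix $PH(n\times(nq+c))$.
   Context: $\mathbb{Z}_2^n$ is the set of sequences $X=(x_0,\dots,x_{n-1})$ with entries in $\{+1,-1\}$, indices mod $n$. The periodic autocorrelation is $\mathsf{P}_X(k)=\sum_{i=0}^{n-1}x_ix_{i+k}$; it depends only on the cyclic-shift class $X_C$. A $PComS(n,q,c)$ is a list (repetitions allowed) of $q$ cyclic-shift classes $A_{1C},\dots,A_{qC}$ with $A_i\in\mathbb{Z}_2^n$ such that $\sum_{i=1}^q\mathsf{P}_{A_i}(k)=c$ for all $1\le k\le n-1$. A partial Hadamard matrix $PH(k\times m)$ is a $k\times m$ matrix $H$ with all entries in $\{+1,-1\}$ satisfying $HH^{t}=mI_k$. *)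

theory Defs
  imports "Jordan_Normal_Form.Matrix"
begin

text \<open>Elements of Z_2^n: +-1 sequences of length n, indices taken mod n.\<close>
definition Z2seq :: "nat \<Rightarrow> int list \<Rightarrow> bool" where
  "Z2seq n X \<longleftrightarrow> length X = n \<and> set X \<subseteq> {1, -1}"

definition PAF :: "int list \<Rightarrow> nat \<Rightarrow> int" where
  "PAF X k = (\<Sum>i<length X. X ! i * X ! ((i + k) mod length X))"

text \<open>A PComS(n,q,c), given by a list of q representatives of the cyclic-shift
  classes (autocorrelation depends only on the class).\<close>
definition is_PComS :: "nat \<Rightarrow> nat \<Rightarrow> int \<Rightarrow> int list list \<Rightarrow> bool" where
  "is_PComS n q c As \<longleftrightarrow> length As = q \<and> (\<forall>A\<in>set As. Z2seq n A) \<and>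
     (\<forall>k\<in>{1..n-1}. (\<Sum>A\<leftarrow>As. PAF A k) = c)"

definition partial_hadamard :: "nat \<Rightarrow> nat \<Rightarrow> int mat \<Rightarrow> bool" where
  "partial_hadamard k m H \<longleftrightarrow> H \<in> carrier_mat k m \<and>
     (\<forall>i<k. \<forall>j<m. H $$ (i, j) \<in> {1, -1}) \<and>
     H * H\<^sup>T = of_nat m \<cdot>\<^sub>m 1\<^sub>m k"

end

theory Submission
  imports Defs
begin

text \<open>Stack, side by side, the n cyclic shifts of each of the q sequences of the PComS and
  append c columns of ones. Row i of the result is the concatenation of the rotations of the
  sequences by i, so the inner product of rows i and i' is the sum of the periodic
  autocorrelations at the shift i' - i (mod n), plus c from the columns of ones. This sum is
  nq + c on the diagonal and -c + c = 0 off it.\<close>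

lemma sum_rotate_mod:
  fixes g :: "nat \<Rightarrow> 'a::comm_monoid_add"
  assumes "n > 0"
  shows "(\<Sum>t<n. g ((i + t) mod n)) = (\<Sum>s<n. g s)"
proof -
  have inj: "inj_on (\<lambda>t. (i + t) mod n) {..<n}"
  proof (rule inj_onI)
    fix x y assume "x \<in> {..<n}" "y \<in> {..<n}" and eq: "(i + x) mod n = (i + y) mod n"
    have "x mod n = y mod n"
      using eq by (simp add: nat_mod_eq_iff)
    with \<open>x \<in> {..<n}\<close> \<open>y \<in> {..<n}\<close> show "x = y" by simp
  qed
  have "(\<lambda>t. (i + t) mod n) ` {..<n} = {..<n}"
    using inj assms by (intro endo_inj_surj) auto
  then show ?thesis
    using sum.reindex[OF inj, of g] by simp
qed

lemma PAF_rotations: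
  assumes "length A = n" "n > 0" "i < n" "i' < n"
  shows "(\<Sum>t<n. A ! ((i + t) mod n) * A ! ((i' + t) mod n)) = PAF A ((i' + n - i) mod n)"
proof -
  have shift: "(i' + t) mod n = ((i + t) mod n + (i' + n - i) mod n) mod n" for t
  proof -
    have "((i + t) mod n + (i' + n - i) mod n) mod n = ((i + t) + (i' + n - i)) mod n"
      by (simp add: mod_add_eq)
    also have "(i + t) + (i' + n - i) = (i' + t) + n"
      using assms(3) by simp
    finally show ?thesis by simp
  qed
  have "(\<Sum>t<n. A ! ((i + t) mod n) * A ! ((i' + t) mod n)) =
      (\<Sum>t<n. (\<lambda>s. A ! s * A ! ((s + (i' + n - i) mod n) mod n)) ((i + t) mod n))"
    by (simp add: shift)
  also have "\<dots> = (\<Sum>s<n. A ! s * A ! ((s + (i' + n - i) mod n) mod n))"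
    by (rule sum_rotate_mod[OF assms(2)])
  finally show ?thesis
    unfolding PAF_def using assms(1) by simp
qed

lemma PAF_0:
  assumes "set A \<subseteq> {1, -1}"
  shows "PAF A 0 = int (length A)"
proof -
  have "A ! s * A ! s = 1" if "s < length A" for s
    using nth_mem[OF that] assms by auto
  then show ?thesis
    unfolding PAF_def by simp
qed

lemma shift_mod_eq_0_iff:
  fixes i i' n :: nat
  assumes "i < n" "i' < n"
  shows "(i' + n - i) mod n = 0 \<longleftrightarrow> i = i'"
proof
  assume "(i' + n - i) mod n = 0"
  then obtain d where d: "i' + n - i = n * d"
    by (auto simp: mod_eq_0_iff_dvd elim: dvdE)
  have "0 < n * d" "n * d < n * 2"
    using assms d by linarith+
  then have "d = 1"
    by (metis One_nat_def less_2_cases mult_less_cancel1 mult_zero_right not_less_zero)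
  then show "i = i'"
    using d assms by simp
qed simp

definition PComS_mat :: "nat \<Rightarrow> nat \<Rightarrow> int list list \<Rightarrow> int mat" where
  "PComS_mat n c As = mat n (n * length As + c)
     (\<lambda>(i, l). if l < n * length As then As ! (l div n) ! ((i + l mod n) mod n) else 1)"

lemma PComS_mat_carrier: "PComS_mat n c As \<in> carrier_mat n (n * length As + c)"
  unfolding PComS_mat_def by simp

lemma PComS_mat_entries:
  assumes "\<forall>A\<in>set As. Z2seq n A" "i < n" "l < n * length As + c"
  shows "PComS_mat n c As $$ (i, l) \<in> {1, -1}"
proof (cases "l < n * length As")
  case True
  let ?A = "As ! (l div n)"
  have "l div n < length As"
    using True by (simp add: less_mult_imp_div_less mult.commute)
  then have A: "Z2seq n ?A"
    using assms(1) by simp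
  then have "?A ! ((i + l mod n) mod n) \<in> set ?A"
    using assms(2) by (intro nth_mem) (simp add: Z2seq_def)
  then have "?A ! ((i + l mod n) mod n) \<in> {1, -1}"
    using A by (auto simp: Z2seq_def)
  then show ?thesis
    using True assms(2,3) by (simp add: PComS_mat_def)
qed (use assms in \<open>simp add: PComS_mat_def\<close>)

lemma PComS_mat_block_inner:
  assumes "\<forall>A\<in>set As. length A = n" "i < n" "i' < n" "j < length As"
  shows "(\<Sum>t<n. PComS_mat n c As $$ (i, j * n + t) * PComS_mat n c As $$ (i', j * n + t))
           = PAF (As ! j) ((i' + n - i) mod n)"
proof -
  have col: "j * n + t < n * length As" if "t < n" for t
  proof -
    have "j * n + t < (j + 1) * n" using that by simp
    also have "\<dots> \<le> length As * n" using assms(4) by (intro mult_right_mono) auto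
    finally show ?thesis by (simp add: mult.commute)
  qed
  have "(\<Sum>t<n. PComS_mat n c As $$ (i, j * n + t) * PComS_mat n c As $$ (i', j * n + t))
      = (\<Sum>t<n. As ! j ! ((i + t) mod n) * As ! j ! ((i' + t) mod n))"
  proof (rule sum.cong[OF refl])
    fix t assume "t \<in> {..<n}"
    then have "j * n + t < n * length As" "(j * n + t) div n = j" "(j * n + t) mod n = t"
      using col by auto
    then show "PComS_mat n c As $$ (i, j * n + t) * PComS_mat n c As $$ (i', j * n + t)
        = As ! j ! ((i + t) mod n) * As ! j ! ((i' + t) mod n)"
      using assms(2,3) by (simp add: PComS_mat_def)
  qed
  also have "\<dots> = PAF (As ! j) ((i' + n - i) mod n)"
    using PAF_rotations[of "As ! j" n i i'] assms by simp
  finally show ?thesis .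
qed

lemma PComS_mat_row_inner:
  assumes "\<forall>A\<in>set As. length A = n" "i < n" "i' < n"
  shows "row (PComS_mat n c As) i \<bullet> row (PComS_mat n c As) i'
           = (\<Sum>A\<leftarrow>As. PAF A ((i' + n - i) mod n)) + int c"
proof -
  define q where "q = length As"
  let ?h = "\<lambda>l. PComS_mat n c As $$ (i, l) * PComS_mat n c As $$ (i', l)"
  have "row (PComS_mat n c As) i \<bullet> row (PComS_mat n c As) i' = (\<Sum>l<q * n + c. ?h l)"
    using assms(2,3) PComS_mat_carrier[of n c As]
    by (simp add: scalar_prod_def atLeast0LessThan q_def mult.commute)
  also have "\<dots> = (\<Sum>l<q * n. ?h l) + (\<Sum>l\<in>{q * n..<q * n + c}. ?h l)"
    by (simp add: sum.atLeastLessThan_concat[symmetric] lessThan_atLeast0)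
  also have "(\<Sum>l\<in>{q * n..<q * n + c}. ?h l) = int c"
    using assms(2,3) by (simp add: PComS_mat_def q_def mult.commute)
  also have "(\<Sum>l<q * n. ?h l) = (\<Sum>j<q. \<Sum>t<n. ?h (j * n + t))"
    by (simp add: sum.nat_group[symmetric] sum.atLeastLessThan_shift_0 atLeast0LessThan)
  also have "\<dots> = (\<Sum>j<q. PAF (As ! j) ((i' + n - i) mod n))"
    using PComS_mat_block_inner[OF assms] by (simp add: q_def)
  also have "\<dots> = (\<Sum>A\<leftarrow>As. PAF A ((i' + n - i) mod n))"
    by (simp add: q_def sum_list_sum_nth atLeast0LessThan)
  finally show ?thesis .
qed

lemma PComS_sum_PAF_shift:
  assumes "is_PComS n q (- int c) As" "i < n" "i' < n"
  shows "(\<Sum>A\<leftarrow>As. PAF A ((i' + n - i) mod n)) = (if i = i' then int (n * q) else - int c)"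
proof (cases "i = i'")
  case True
  then show ?thesis
    using assms(1) by (simp add: is_PComS_def PAF_0 Z2seq_def sum_list_triv cong: map_cong)
next
  case False
  then have "(i' + n - i) mod n \<in> {1..n-1}"
    using shift_mod_eq_0_iff[OF assms(2,3)] assms(2) by (auto simp: less_Suc_eq_le[symmetric])
  then show ?thesis
    using assms(1) False by (simp add: is_PComS_def)
qed

lemma PComS_mat_gram:
  assumes "is_PComS n q (- int c) As"
  shows "PComS_mat n c As * (PComS_mat n c As)\<^sup>T = of_nat (n * q + c) \<cdot>\<^sub>m 1\<^sub>m n"
    (is "?H * ?H\<^sup>T = _")
proof (rule eq_matI)
  fix i i' assume "i < dim_row (of_nat (n * q + c) \<cdot>\<^sub>m (1\<^sub>m n :: int mat))"
    and "i' < dim_col (of_nat (n * q + c) \<cdot>\<^sub>m (1\<^sub>m n :: int mat))"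
  then have i: "i < n" and i': "i' < n" by auto
  have "\<forall>A\<in>set As. length A = n" "length As = q"
    using assms by (auto simp: is_PComS_def Z2seq_def)
  then show "(?H * ?H\<^sup>T) $$ (i, i') = (of_nat (n * q + c) \<cdot>\<^sub>m 1\<^sub>m n) $$ (i, i')"
    using PComS_mat_row_inner[of As n i i' c] PComS_sum_PAF_shift[OF assms i i']
      PComS_mat_carrier[of n c As] i i'
    by auto
qed (use PComS_mat_carrier assms in \<open>auto simp: is_PComS_def\<close>)

theorem theorem20:
  fixes n q c :: nat
  assumes "n \<ge> 1" and "q \<ge> 1"
    and "\<exists>As. is_PComS n q (- int c) As"
  shows "\<exists>H. partial_hadamard n (n * q + c) H"
proof -
  obtain As where As: "is_PComS n q (- int c) As"
    using assms(3) by blast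
  then have "length As = q" and Z: "\<forall>A\<in>set As. Z2seq n A"
    by (auto simp: is_PComS_def)
  then have "partial_hadamard n (n * q + c) (PComS_mat n c As)"
    unfolding partial_hadamard_def
    using PComS_mat_carrier[of n c As] PComS_mat_entries[OF Z] PComS_mat_gram[OF As] by auto
  then show ?thesis ..
qed

end
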